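(* For every graph $G$, any graph obtained from $G$ by subdividing every edge at least twice (i.e. replacing each edge by a path with at least two internal vertices, the numbers of internal vertices possibly differing between edges) belongs to 3-CBU.
   Context: Let $e_1,e_2,e_3$ be the standard basis of $\mathbb{R}^3$. A graph belongs to 3-CBU if one can assign to each vertex an axis-parallel box (product of 3 closed intervals of positive length) in $\mathbb{R}^3$ such that the boxes have pairwise disjoint interiors, two distinct vertices are adjacent iff their boxes intersect, and any two intersecting boxes intersect in a 2-dimensional box orthogonal to $e_1$. *)

theory Defs
  imports "HOL-Analysis.Analysis"
begin

definition simple_graph :: "'a set \<Rightarrow> 'a set set \<Rightarrow> bool" where
  "simple_graph V E \<longleftrightarrow> finite V \<and>
     (\<forall>e\<in>E. \<exists>u v. u \<noteq> v \<and> u \<in> V \<and> v \<in> V \<and> e = {u, v})"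

definition internal :: "'b list \<Rightarrow> 'b set" where
  "internal p = set (butlast (tl p))"

definition path_edges :: "'b list \<Rightarrow> 'b set set" where
  "path_edges p = {{p ! i, p ! Suc i} | i. Suc i < length p}"

text \<open>(W,F) is obtained from (V,E) by replacing every edge by a path with at least
  two internal vertices (up to isomorphism: f identifies the original vertices).\<close>
definition subdivided_twice ::
  "'a set \<Rightarrow> 'a set set \<Rightarrow> 'b set \<Rightarrow> 'b set set \<Rightarrow> bool" where
  "subdivided_twice V E W F \<longleftrightarrow>
    (\<exists>(f :: 'a \<Rightarrow> 'b) (P :: 'a set \<Rightarrow> 'b list).
       inj_on f V \<and>
       (\<forall>e\<in>E. \<exists>u v. e = {u, v} \<and> length (P e) \<ge> 4 \<and> distinct (P e) \<and>
                  hd (P e) = f u \<and> last (P e) = f v \<and> internal (P e) \<inter> f ` V = {}) \<and>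
       (\<forall>e\<in>E. \<forall>e'\<in>E. e \<noteq> e' \<longrightarrow> internal (P e) \<inter> internal (P e') = {}) \<and>
       W = f ` V \<union> (\<Union>e\<in>E. set (P e)) \<and>
       F = (\<Union>e\<in>E. path_edges (P e)))"

text \<open>Axis-parallel box with corners lo, hi; coordinates indexed by 1,2,3 :: 3,
  coordinate 1 corresponding to e_1.\<close>
definition cbu3 :: "'b set \<Rightarrow> 'b set set \<Rightarrow> bool" where
  "cbu3 W F \<longleftrightarrow>
    (\<exists>lo hi :: 'b \<Rightarrow> real^3.
       (\<forall>v\<in>W. \<forall>i. lo v $ i < hi v $ i) \<and>
       (\<forall>v\<in>W. \<forall>w\<in>W. v \<noteq> w \<longrightarrow>
          interior (cbox (lo v) (hi v)) \<inter> interior (cbox (lo w) (hi w)) = {} \<and>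
          ({v, w} \<in> F \<longleftrightarrow> cbox (lo v) (hi v) \<inter> cbox (lo w) (hi w) \<noteq> {}) \<and>
          (cbox (lo v) (hi v) \<inter> cbox (lo w) (hi w) \<noteq> {} \<longrightarrow>
             (\<exists>a b. cbox (lo v) (hi v) \<inter> cbox (lo w) (hi w) = cbox a b \<and>
                a $ 1 = b $ 1 \<and> a $ 2 < b $ 2 \<and> a $ 3 < b $ 3))))"

end

(*
  Number the branch vertices injectively by idx and the subdivision paths by 0, ..., K - 1, and
  orient every path from its end of smaller index i to its end of larger index j.  The branch
  vertex of index l gets the box [4l, 4l+1] x [0, 3K+1] x [3l, 3l+1], which crosses every layer
  of the e2-direction.  All internal vertices of the path of index k lie in the layer [3k, 3k+1]
  of e2.  If the path has m internal vertices, the first m - 1 of them cut [4i+1, 4i+2] into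
  consecutive pieces along e1 and extend over [3i, 3j+1] along e3, and the last one spans
  [4i+2, 4j] along e1 at e3-height [3j, 3j+1], passing above the branch vertices with index
  strictly between i and j.  Thus m >= 2 lets the path leave the box of i at one e3-height and
  enter the box of j at another.  Consecutive vertices of a path meet in a face orthogonal to e1,
  and any two other boxes are strictly separated along some axis.
*)

theory Submission
  imports Defs
begin

lemma internal_conv_nth: "internal xs = {xs ! q | q. 0 < q \<and> q < length xs - 1}"
proof -
  have "butlast (tl xs) ! r = xs ! Suc r" if "r < length xs - 2" for r
    using that by (simp add: nth_butlast nth_tl)
  then have "internal xs = {xs ! Suc r | r. r < length xs - 2}"
    unfolding internal_def set_conv_nth by auto (metis numeral_2_eq_2)
  also have "\<dots> = {xs ! q | q. 0 < q \<and> q < length xs - 1}"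
  proof (intro equalityI subsetI; clarify)
    fix q assume "0 < q" "q < length xs - 1"
    then show "\<exists>r. xs ! q = xs ! Suc r \<and> r < length xs - 2"
      by (intro exI[of _ "q - 1"]) auto
  qed force
  finally show ?thesis .
qed

lemma internal_rev: "internal (rev xs) = internal xs"
  unfolding internal_def by (metis butlast_rev butlast_tl rev_rev_ident set_rev)

lemma path_edges_rev_subset: "path_edges (rev xs) \<subseteq> path_edges xs"
proof
  fix e assume "e \<in> path_edges (rev xs)"
  then obtain i where i: "Suc i < length xs" "e = {rev xs ! i, rev xs ! Suc i}"
    unfolding path_edges_def by auto
  then have "e = {xs ! Suc (length xs - 2 - i), xs ! (length xs - 2 - i)}"
    by (simp add: rev_nth Suc_diff_Suc numeral_2_eq_2)
  then show "e \<in> path_edges xs"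
    unfolding path_edges_def using i(1) by (auto simp: insert_commute)
qed

lemma path_edges_rev: "path_edges (rev xs) = path_edges xs"
  using path_edges_rev_subset[of xs] path_edges_rev_subset[of "rev xs"] by simp

lemma distinct_hd_neq_last: "distinct xs \<Longrightarrow> 2 \<le> length xs \<Longrightarrow> hd xs \<noteq> last xs"
  by (cases xs) auto

definition box_separated :: "real^3 \<Rightarrow> real^3 \<Rightarrow> real^3 \<Rightarrow> real^3 \<Rightarrow> bool" where
  "box_separated a b c d \<longleftrightarrow> (\<exists>i. b $ i < c $ i \<or> d $ i < a $ i)"

lemma box_separated_commute: "box_separated a b c d \<longleftrightarrow> box_separated c d a b"
  unfolding box_separated_def by blast

lemma box_separated_disjoint: "box_separated a b c d \<Longrightarrow> cbox a b \<inter> cbox c d = {}"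
  unfolding box_separated_def disjoint_interval_cart(1) by blast

definition e1_face_adjacent :: "real^3 \<Rightarrow> real^3 \<Rightarrow> real^3 \<Rightarrow> real^3 \<Rightarrow> bool" where
  "e1_face_adjacent a b c d \<longleftrightarrow> b $ 1 = c $ 1 \<and>
     max (a $ 2) (c $ 2) < min (b $ 2) (d $ 2) \<and> max (a $ 3) (c $ 3) < min (b $ 3) (d $ 3)"

lemma e1_face_adjacent_boxes:
  fixes a b c d :: "real^3"
  assumes adj: "e1_face_adjacent a b c d" and "a $ 1 < b $ 1" "c $ 1 < d $ 1"
  shows "interior (cbox a b) \<inter> interior (cbox c d) = {}"
    and "cbox a b \<inter> cbox c d \<noteq> {}"
    and "\<exists>p q. cbox a b \<inter> cbox c d = cbox p q \<and> p $ 1 = q $ 1 \<and> p $ 2 < q $ 2 \<and> p $ 3 < q $ 3"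
proof -
  show "interior (cbox a b) \<inter> interior (cbox c d) = {}"
    using adj unfolding interior_cbox disjoint_interval_cart(4) e1_face_adjacent_def
    by (intro exI[of _ 1]) simp
  define p :: "real^3" where "p = (\<chi> i. max (a $ i) (c $ i))"
  define q :: "real^3" where "q = (\<chi> i. min (b $ i) (d $ i))"
  have meet: "cbox a b \<inter> cbox c d = cbox p q"
    unfolding p_def q_def Int_interval_cart interval_cbox_cart ..
  have flat: "p $ 1 = q $ 1 \<and> p $ 2 < q $ 2 \<and> p $ 3 < q $ 3"
    using assms unfolding p_def q_def e1_face_adjacent_def by auto
  then show "\<exists>p q. cbox a b \<inter> cbox c d = cbox p q \<and> p $ 1 = q $ 1 \<and> p $ 2 < q $ 2 \<and> p $ 3 < q $ 3"
    using meet by blast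
  have "p $ i \<le> q $ i" for i
    using flat exhaust_3[of i] by auto
  then show "cbox a b \<inter> cbox c d \<noteq> {}"
    unfolding meet interval_ne_empty_cart by blast
qed

lemma cbu3I:
  fixes lo hi :: "'b \<Rightarrow> real^3"
  assumes proper: "\<And>v c. v \<in> W \<Longrightarrow> lo v $ c < hi v $ c"
    and adjacent: "\<And>v w. v \<in> W \<Longrightarrow> w \<in> W \<Longrightarrow> {v, w} \<in> F \<Longrightarrow>
      e1_face_adjacent (lo v) (hi v) (lo w) (hi w) \<or> e1_face_adjacent (lo w) (hi w) (lo v) (hi v)"
    and nonadjacent: "\<And>v w. v \<in> W \<Longrightarrow> w \<in> W \<Longrightarrow> v \<noteq> w \<Longrightarrow> {v, w} \<notin> F \<Longrightarrow>
      box_separated (lo v) (hi v) (lo w) (hi w)"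
  shows "cbu3 W F"
proof -
  have "interior (cbox (lo v) (hi v)) \<inter> interior (cbox (lo w) (hi w)) = {} \<and>
      ({v, w} \<in> F \<longleftrightarrow> cbox (lo v) (hi v) \<inter> cbox (lo w) (hi w) \<noteq> {}) \<and>
      (cbox (lo v) (hi v) \<inter> cbox (lo w) (hi w) \<noteq> {} \<longrightarrow>
        (\<exists>a b. cbox (lo v) (hi v) \<inter> cbox (lo w) (hi w) = cbox a b \<and>
           a $ 1 = b $ 1 \<and> a $ 2 < b $ 2 \<and> a $ 3 < b $ 3))"
    if vw: "v \<in> W" "w \<in> W" "v \<noteq> w" for v w
  proof (cases "{v, w} \<in> F")
    case True
    then show ?thesis
      using adjacent[OF vw(1,2)] e1_face_adjacent_boxes proper[OF vw(1)] proper[OF vw(2)] Int_commute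
      by metis
  next
    case False
    then show ?thesis
      using box_separated_disjoint[OF nonadjacent[OF vw False]] interior_subset by blast
  qed
  then show ?thesis
    unfolding cbu3_def using proper by blast
qed

definition edge_breakpoint :: "nat \<Rightarrow> nat \<Rightarrow> nat \<Rightarrow> nat \<Rightarrow> real" where
  "edge_breakpoint i j m q = (if q < m then 4 * real i + 1 + real q / real (m - 1) else 4 * real j)"

lemma edge_breakpoint_0: "0 < m \<Longrightarrow> edge_breakpoint i j m 0 = 4 * real i + 1"
  by (simp add: edge_breakpoint_def)

lemma edge_breakpoint_last: "edge_breakpoint i j m m = 4 * real j"
  by (simp add: edge_breakpoint_def)

lemma edge_breakpoint_before_last: "2 \<le> m \<Longrightarrow> edge_breakpoint i j m (m - 1) = 4 * real i + 2"
  by (simp add: edge_breakpoint_def)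

lemma edge_breakpoint_le: "q < m \<Longrightarrow> edge_breakpoint i j m q \<le> 4 * real i + 2"
  by (auto simp: edge_breakpoint_def divide_le_eq_1)

lemma edge_breakpoint_ge: "q < m \<Longrightarrow> 4 * real i + 1 \<le> edge_breakpoint i j m q"
  by (simp add: edge_breakpoint_def)

lemma edge_breakpoint_strict_mono:
  assumes "i < j" "2 \<le> m" "q < q'" "q' \<le> m"
  shows "edge_breakpoint i j m q < edge_breakpoint i j m q'"
proof (cases "q' < m")
  case True
  then show ?thesis
    using assms by (simp add: edge_breakpoint_def divide_strict_right_mono)
next
  case False
  have "edge_breakpoint i j m q \<le> 4 * real i + 2"
    using assms by (intro edge_breakpoint_le) auto
  also have "\<dots> < 4 * real j"
    using \<open>i < j\<close> by simp
  finally show ?thesis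
    using False assms by (simp add: edge_breakpoint_def)
qed

locale oriented_path_system =
  fixes U :: "'b set" and paths :: "'b list set"
    and idx :: "'b \<Rightarrow> nat" and path_idx :: "'b list \<Rightarrow> nat" and K :: nat
  assumes idx_inj: "inj_on idx U"
    and path_idx_inj: "inj_on path_idx paths"
    and path_idx_less: "p \<in> paths \<Longrightarrow> path_idx p < K"
    and path_length: "p \<in> paths \<Longrightarrow> 4 \<le> length p"
    and path_distinct: "p \<in> paths \<Longrightarrow> distinct p"
    and path_hd: "p \<in> paths \<Longrightarrow> hd p \<in> U"
    and path_last: "p \<in> paths \<Longrightarrow> last p \<in> U"
    and path_oriented: "p \<in> paths \<Longrightarrow> idx (hd p) < idx (last p)"
    and internal_not_branch: "p \<in> paths \<Longrightarrow> internal p \<inter> U = {}"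
    and internal_disjoint: "p \<in> paths \<Longrightarrow> p' \<in> paths \<Longrightarrow> p \<noteq> p' \<Longrightarrow> internal p \<inter> internal p' = {}"
begin

abbreviation vertices :: "'b set" where "vertices \<equiv> U \<union> \<Union>(set ` paths)"
abbreviation edges :: "'b set set" where "edges \<equiv> \<Union>(path_edges ` paths)"

lemma nth_in_branch_iff:
  assumes "p \<in> paths" "q < length p"
  shows "p ! q \<in> U \<longleftrightarrow> q = 0 \<or> q = length p - 1"
proof
  assume "p ! q \<in> U"
  then have "p ! q \<notin> internal p"
    using internal_not_branch[OF assms(1)] by blast
  then show "q = 0 \<or> q = length p - 1"
    using assms(2) unfolding internal_conv_nth by auto
next
  have "p \<noteq> []" using path_length[OF assms(1)] by auto
  then show "q = 0 \<or> q = length p - 1 \<Longrightarrow> p ! q \<in> U"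
    using path_hd[OF assms(1)] path_last[OF assms(1)] by (auto simp: hd_conv_nth last_conv_nth)
qed

definition path_of :: "'b \<Rightarrow> 'b list" where
  "path_of w = (THE p. p \<in> paths \<and> w \<in> internal p)"

definition pos :: "'b \<Rightarrow> nat" where
  "pos w = (THE q. q < length (path_of w) \<and> path_of w ! q = w)"

lemma
  assumes "p \<in> paths" "0 < q" "q < length p - 1"
  shows path_of_nth: "path_of (p ! q) = p" and pos_nth: "pos (p ! q) = q"
proof -
  have "p ! q \<in> internal p"
    using assms(2,3) unfolding internal_conv_nth by auto
  then show path_of: "path_of (p ! q) = p"
    unfolding path_of_def using assms(1) internal_disjoint by (intro the_equality) blast+
  show "pos (p ! q) = q"
    unfolding pos_def path_of using assms path_distinct[OF assms(1)]
    by (intro the_equality) (auto simp: nth_eq_iff_index_eq)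
qed

lemma inner_vertexE:
  assumes "w \<in> vertices" "w \<notin> U"
  obtains p q where "p \<in> paths" "0 < q" "q < length p - 1" "w = p ! q"
proof -
  obtain p q where "p \<in> paths" "q < length p" "w = p ! q"
    using assms by (auto simp: in_set_conv_nth)
  with assms(2) nth_in_branch_iff show thesis
    by (intro that[of p q]) auto
qed

definition lo :: "'b \<Rightarrow> real^3" where
  "lo w = (if w \<in> U then vector [4 * real (idx w), 0, 3 * real (idx w)]
     else let p = path_of w; q = pos w; i = idx (hd p); j = idx (last p); m = length p - 2 in
       vector [edge_breakpoint i j m (q - 1), 3 * real (path_idx p), 3 * real (if q < m then i else j)])"

definition hi :: "'b \<Rightarrow> real^3" where
  "hi w = (if w \<in> U then vector [4 * real (idx w) + 1, 3 * real K + 1, 3 * real (idx w) + 1]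
     else let p = path_of w; q = pos w; i = idx (hd p); j = idx (last p); m = length p - 2 in
       vector [edge_breakpoint i j m q, 3 * real (path_idx p) + 1, 3 * real j + 1])"

abbreviation separated :: "'b \<Rightarrow> 'b \<Rightarrow> bool" where
  "separated v w \<equiv> box_separated (lo v) (hi v) (lo w) (hi w)"

lemma
  assumes "p \<in> paths" "0 < q" "q < length p - 1"
  shows lo_nth: "lo (p ! q) = vector [edge_breakpoint (idx (hd p)) (idx (last p)) (length p - 2) (q - 1),
      3 * real (path_idx p), 3 * real (if q < length p - 2 then idx (hd p) else idx (last p))]"
    and hi_nth: "hi (p ! q) = vector [edge_breakpoint (idx (hd p)) (idx (last p)) (length p - 2) q,
      3 * real (path_idx p) + 1, 3 * real (idx (last p)) + 1]"
  using assms nth_in_branch_iff[OF assms(1)] path_of_nth[OF assms] pos_nth[OF assms]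
  by (auto simp: lo_def hi_def Let_def)

lemma path_shape:
  assumes "p \<in> paths"
  shows "idx (hd p) < idx (last p)" "2 \<le> length p - 2" "length p = (length p - 2) + 2"
    "path_idx p < K" "p ! 0 = hd p" "p ! (length p - 2 + 1) = last p"
proof -
  have "4 \<le> length p" using path_length[OF assms] .
  moreover from this have "length p - 2 + 1 = length p - 1" by simp
  ultimately show "idx (hd p) < idx (last p)" "2 \<le> length p - 2" "length p = (length p - 2) + 2"
    "path_idx p < K" "p ! 0 = hd p" "p ! (length p - 2 + 1) = last p"
    using path_oriented[OF assms] path_idx_less[OF assms] hd_conv_nth[of p] last_conv_nth[of p]
    by force+
qed

lemma lo_less_hi:
  assumes "w \<in> vertices"
  shows "lo w $ c < hi w $ c"
proof (cases "w \<in> U")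
  case True
  then show ?thesis
    using exhaust_3[of c] by (auto simp: lo_def hi_def)
next
  case False
  then obtain p q where pq: "p \<in> paths" "0 < q" "q < length p - 1" "w = p ! q"
    using assms by (elim inner_vertexE)
  note shape = path_shape[OF pq(1)]
  have "edge_breakpoint (idx (hd p)) (idx (last p)) (length p - 2) (q - 1)
      < edge_breakpoint (idx (hd p)) (idx (last p)) (length p - 2) q"
    using pq shape by (intro edge_breakpoint_strict_mono) auto
  then show ?thesis
    using exhaust_3[of c] pq shape by (auto simp: lo_nth hi_nth)
qed

lemma consecutive_e1_face_adjacent:
  assumes "p \<in> paths" "Suc q < length p"
  shows "e1_face_adjacent (lo (p ! q)) (hi (p ! q)) (lo (p ! Suc q)) (hi (p ! Suc q))"
proof -
  define i j m where "i = idx (hd p)" and "j = idx (last p)" and "m = length p - 2"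
  note shape = path_shape[OF assms(1), folded i_def j_def m_def]
  note inner = lo_nth[OF assms(1), folded i_def j_def m_def] hi_nth[OF assms(1), folded i_def j_def m_def]
  consider "q = 0" | "q = m" | "0 < q" "q < m"
    using assms(2) shape by linarith
  then show ?thesis
  proof cases
    case 1
    then show ?thesis
      using shape path_hd[OF assms(1)] inner[of 1]
      by (simp add: e1_face_adjacent_def lo_def hi_def edge_breakpoint_0 i_def)
  next
    case 2
    then show ?thesis
      using shape path_last[OF assms(1)] inner[of m]
      by (simp add: e1_face_adjacent_def lo_def hi_def edge_breakpoint_last j_def)
  next
    case 3
    then show ?thesis
      using shape inner[of q] inner[of "Suc q"]
      by (simp add: e1_face_adjacent_def)
  qed
qed

lemma branch_branch_separated:
  assumes "u \<in> U" "v \<in> U" "u \<noteq> v"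
  shows "separated u v"
proof -
  have "idx u \<noteq> idx v"
    using idx_inj assms by (auto dest: inj_onD)
  then have "4 * real (idx u) + 1 < 4 * real (idx v) \<or> 4 * real (idx v) + 1 < 4 * real (idx u)"
    by linarith
  then show ?thesis
    using assms unfolding box_separated_def by (intro exI[of _ 1]) (simp add: lo_def hi_def)
qed

lemma branch_inner_separated:
  assumes "u \<in> U" "p \<in> paths" "0 < q" "q < length p - 1"
    and not_first: "q = 1 \<Longrightarrow> u \<noteq> hd p" and not_last: "q = length p - 2 \<Longrightarrow> u \<noteq> last p"
  shows "separated u (p ! q)"
proof -
  define i j m l where "i = idx (hd p)" and "j = idx (last p)" and "m = length p - 2" and "l = idx u"
  note shape = path_shape[OF assms(2), folded i_def j_def m_def]
  note inner = lo_nth[OF assms(2-4), folded i_def j_def m_def] hi_nth[OF assms(2-4), folded i_def j_def m_def]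
  have branch: "lo u = vector [4 * real l, 0, 3 * real l]" "hi u = vector [4 * real l + 1, 3 * real K + 1, 3 * real l + 1]"
    using assms(1) by (simp_all add: lo_def hi_def l_def)
  have l_eq: "l = i \<Longrightarrow> u = hd p" "l = j \<Longrightarrow> u = last p"
    using idx_inj assms(1) path_hd[OF assms(2)] path_last[OF assms(2)]
    unfolding i_def j_def l_def by (auto dest: inj_onD)
  consider "q < m" "l < i" | "q < m" "l = i" | "q < m" "i < l" | "q = m" "l \<le> i" | "q = m" "i < l" "l < j"
    | "q = m" "l = j" | "q = m" "j < l"
    using assms(4) shape by linarith
  then show ?thesis
  proof cases
    case 1
    then have "4 * real l + 1 < edge_breakpoint i j m (q - 1)"
      using edge_breakpoint_ge[of "q - 1" m i j] by linarith
    then show ?thesis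
      using 1 branch inner unfolding box_separated_def by (intro exI[of _ 1]) simp
  next
    case 2
    then have "2 \<le> q" using not_first l_eq assms(3) by fastforce
    then have "edge_breakpoint i j m 0 < edge_breakpoint i j m (q - 1)"
      using 2 shape by (intro edge_breakpoint_strict_mono) auto
    then show ?thesis
      using 2 shape branch inner unfolding box_separated_def
      by (intro exI[of _ 1]) (simp add: edge_breakpoint_0)
  next
    case 3
    then have "edge_breakpoint i j m q < 4 * real l"
      using edge_breakpoint_le[of q m i j] by linarith
    then show ?thesis
      using branch inner unfolding box_separated_def by (intro exI[of _ 1]) simp
  next
    case 4
    then have "4 * real l + 1 < edge_breakpoint i j m (q - 1)"
      using shape edge_breakpoint_before_last[of m i j] by simp
    then show ?thesis
      using branch inner unfolding box_separated_def by (intro exI[of _ 1]) simp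
  next
    case 5
    then show ?thesis
      using branch inner unfolding box_separated_def by (intro exI[of _ 3]) simp
  next
    case 6
    then show ?thesis using not_last l_eq unfolding m_def by blast
  next
    case 7
    then show ?thesis
      using branch inner unfolding box_separated_def by (intro exI[of _ 1]) (simp add: edge_breakpoint_last)
  qed
qed

lemma inner_inner_separated_paths:
  assumes "p \<in> paths" "0 < q" "q < length p - 1" "p' \<in> paths" "0 < q'" "q' < length p' - 1" "p \<noteq> p'"
  shows "separated (p ! q) (p' ! q')"
proof -
  have "path_idx p \<noteq> path_idx p'"
    using path_idx_inj assms by (auto dest: inj_onD)
  then have "3 * real (path_idx p) + 1 < 3 * real (path_idx p') \<or> 3 * real (path_idx p') + 1 < 3 * real (path_idx p)"
    by linarith
  then show ?thesis
    using assms unfolding box_separated_def by (intro exI[of _ 2]) (simp add: lo_nth hi_nth)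
qed

lemma inner_inner_separated_same_path:
  assumes "p \<in> paths" "0 < q" "Suc q < q'" "q' < length p - 1"
  shows "separated (p ! q) (p ! q')"
proof -
  note shape = path_shape[OF assms(1)]
  have "edge_breakpoint (idx (hd p)) (idx (last p)) (length p - 2) q
      < edge_breakpoint (idx (hd p)) (idx (last p)) (length p - 2) (q' - 1)"
    using assms shape by (intro edge_breakpoint_strict_mono) auto
  then show ?thesis
    using assms unfolding box_separated_def by (intro exI[of _ 1]) (simp add: lo_nth hi_nth)
qed

lemma nonadjacent_separated:
  assumes "v \<in> vertices" "w \<in> vertices" "v \<noteq> w" "{v, w} \<notin> edges"
  shows "separated v w"
proof -
  have not_consecutive: "{p ! r, p ! Suc r} \<noteq> {v, w}" if "p \<in> paths" "Suc r < length p" for p r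
    using assms(4) that unfolding path_edges_def by blast
  have branch_inner: "separated u x"
    if u: "u \<in> U" and x: "x \<in> vertices" "x \<notin> U" and uv: "{u, x} = {v, w}" for u x
  proof -
    obtain p q where pq: "p \<in> paths" "0 < q" "q < length p - 1" "x = p ! q"
      using x by (elim inner_vertexE)
    note shape = path_shape[OF pq(1)]
    have "q = 1 \<Longrightarrow> u \<noteq> hd p"
      using not_consecutive[OF pq(1), of 0] shape uv pq by (auto simp: insert_commute)
    moreover have "q = length p - 2 \<Longrightarrow> u \<noteq> last p"
      using not_consecutive[OF pq(1), of q] shape uv pq by (auto simp: insert_commute)
    ultimately show ?thesis
      using branch_inner_separated[OF u pq(1-3)] pq(4) by blast
  qed
  have inner_inner: "separated x y"
    if x: "x \<in> vertices" "x \<notin> U" and y: "y \<in> vertices" "y \<notin> U" and xy: "{x, y} = {v, w}" for x y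
  proof -
    obtain p q where pq: "p \<in> paths" "0 < q" "q < length p - 1" "x = p ! q"
      using x by (elim inner_vertexE)
    obtain p' q' where pq': "p' \<in> paths" "0 < q'" "q' < length p' - 1" "y = p' ! q'"
      using y by (elim inner_vertexE)
    show ?thesis
    proof (cases "p = p'")
      case True
      have "q \<noteq> q'" "q' \<noteq> Suc q" "q \<noteq> Suc q'"
        using assms(3) xy pq pq' True not_consecutive[OF pq(1), of q] not_consecutive[OF pq(1), of q']
        by (auto simp: insert_commute)
      then consider "Suc q < q'" | "Suc q' < q" by linarith
      then show ?thesis
        using inner_inner_separated_same_path pq pq' True box_separated_commute by cases metis+
    qed (use inner_inner_separated_paths pq pq' in blast)
  qed
  show ?thesis
  proof (cases "v \<in> U"; cases "w \<in> U")
    assume "v \<in> U" "w \<in> U"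
    then show ?thesis using branch_branch_separated assms(3) by blast
  next
    assume "v \<in> U" "w \<notin> U"
    then show ?thesis using branch_inner assms(2) by blast
  next
    assume "v \<notin> U" "w \<in> U"
    then show ?thesis using branch_inner[of w v] assms(1) box_separated_commute by (auto simp: insert_commute)
  next
    assume "v \<notin> U" "w \<notin> U"
    then show ?thesis using inner_inner assms(1,2) by blast
  qed
qed

lemma cbu3_vertices_edges: "cbu3 vertices edges"
proof (rule cbu3I)
  fix v w assume "{v, w} \<in> edges"
  then obtain p r where "p \<in> paths" "Suc r < length p" "{v, w} = {p ! r, p ! Suc r}"
    unfolding path_edges_def by blast
  then show "e1_face_adjacent (lo v) (hi v) (lo w) (hi w) \<or> e1_face_adjacent (lo w) (hi w) (lo v) (hi v)"
    using consecutive_e1_face_adjacent by (auto simp: doubleton_eq_iff)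
qed (use lo_less_hi nonadjacent_separated in auto)

end

theorem cbu3_internally_disjoint_paths:
  fixes U :: "'b set" and paths :: "'b list set"
  assumes "finite U" "finite paths"
    and long: "\<And>p. p \<in> paths \<Longrightarrow> 4 \<le> length p"
    and distinct: "\<And>p. p \<in> paths \<Longrightarrow> distinct p"
    and ends: "\<And>p. p \<in> paths \<Longrightarrow> hd p \<in> U \<and> last p \<in> U"
    and internal: "\<And>p. p \<in> paths \<Longrightarrow> internal p \<inter> U = {}"
    and disjoint: "\<And>p p'. p \<in> paths \<Longrightarrow> p' \<in> paths \<Longrightarrow> p \<noteq> p' \<Longrightarrow> internal p \<inter> internal p' = {}"
  shows "cbu3 (U \<union> \<Union>(set ` paths)) (\<Union>(path_edges ` paths))"
proof -
  obtain idx :: "'b \<Rightarrow> nat" where idx: "inj_on idx U"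
    using finite_imp_inj_to_nat_seg[OF assms(1)] by blast
  define orient where "orient p = (if idx (hd p) < idx (last p) then p else rev p)" for p :: "'b list"
  have orient_cases: "orient p = p \<or> orient p = rev p" for p
    unfolding orient_def by simp
  have set_orient: "set (orient p) = set p" and internal_orient: "internal (orient p) = internal p"
    and path_edges_orient: "path_edges (orient p) = path_edges p" for p
    using orient_cases[of p] by (auto simp: internal_rev path_edges_rev)
  have oriented: "idx (hd (orient p)) < idx (last (orient p))" if "p \<in> paths" for p
  proof -
    have "hd p \<noteq> last p"
      using distinct_hd_neq_last[OF distinct[OF that]] long[OF that] by simp
    then have "idx (hd p) \<noteq> idx (last p)"
      using idx ends[OF that] by (auto dest: inj_onD)
    then show ?thesis
      using long[OF that] by (auto simp: orient_def hd_rev last_rev)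
  qed
  obtain path_idx :: "'b list \<Rightarrow> nat" and K where path_idx:
    "path_idx ` orient ` paths = {i. i < K}" "inj_on path_idx (orient ` paths)"
    using finite_imp_inj_to_nat_seg[OF finite_imageI[OF assms(2), of orient]] by blast
  interpret oriented_path_system U "orient ` paths" idx path_idx K
  proof
    fix p assume "p \<in> orient ` paths"
    then obtain p0 where p0: "p0 \<in> paths" "p = orient p0" by blast
    show "path_idx p < K" using path_idx(1) \<open>p \<in> orient ` paths\<close> by blast
    show "4 \<le> length p" "distinct p" "hd p \<in> U" "last p \<in> U" "idx (hd p) < idx (last p)"
      using p0 orient_cases[of p0] long distinct ends oriented by (auto simp: hd_rev last_rev)
    show "internal p \<inter> U = {}"
      using p0 internal internal_orient by simp
  next
    fix p p' assume "p \<in> orient ` paths" "p' \<in> orient ` paths" "p \<noteq> p'"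
    then obtain p0 p0' where "p0 \<in> paths" "p0' \<in> paths" "p0 \<noteq> p0'" "p = orient p0" "p' = orient p0'"
      by blast
    then show "internal p \<inter> internal p' = {}"
      using disjoint internal_orient by simp
  qed (use idx path_idx in auto)
  have "\<Union>(set ` orient ` paths) = \<Union>(set ` paths)" "\<Union>(path_edges ` orient ` paths) = \<Union>(path_edges ` paths)"
    using set_orient path_edges_orient by auto
  then show ?thesis
    using cbu3_vertices_edges by simp
qed

theorem mainTheorem18:
  fixes V :: "'a set" and E :: "'a set set" and W :: "'b set" and F :: "'b set set"
  assumes "simple_graph V E"
    and "subdivided_twice V E W F"
  shows "cbu3 W F"
proof -
  obtain f :: "'a \<Rightarrow> 'b" and P :: "'a set \<Rightarrow> 'b list" where
    paths: "\<forall>e\<in>E. \<exists>u v. e = {u, v} \<and> length (P e) \<ge> 4 \<and> distinct (P e) \<and>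
                  hd (P e) = f u \<and> last (P e) = f v \<and> internal (P e) \<inter> f ` V = {}"
    and disjoint: "\<forall>e\<in>E. \<forall>e'\<in>E. e \<noteq> e' \<longrightarrow> internal (P e) \<inter> internal (P e') = {}"
    and W: "W = f ` V \<union> (\<Union>e\<in>E. set (P e))" and F: "F = (\<Union>e\<in>E. path_edges (P e))"
    using assms(2) unfolding subdivided_twice_def by (elim exE conjE) (rule that; assumption)
  have "finite V" and E: "\<forall>e\<in>E. \<exists>u v. u \<noteq> v \<and> u \<in> V \<and> v \<in> V \<and> e = {u, v}"
    using assms(1) unfolding simple_graph_def by blast+
  moreover from E have "E \<subseteq> Pow V"
    by auto
  ultimately have "finite E"
    by (simp add: finite_subset)
  have "cbu3 (f ` V \<union> \<Union>(set ` P ` E)) (\<Union>(path_edges ` P ` E))"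
  proof (rule cbu3_internally_disjoint_paths)
    fix p assume "p \<in> P ` E"
    then obtain e where e: "e \<in> E" "p = P e"
      by blast
    then obtain u v where uv: "e = {u, v}" "4 \<le> length p" "distinct p" "hd p = f u" "last p = f v"
      "internal p \<inter> f ` V = {}"
      using paths by blast
    moreover have "u \<in> V" "v \<in> V"
      using E e(1) uv(1) by (auto simp: doubleton_eq_iff)
    ultimately show "4 \<le> length p" "distinct p" "hd p \<in> f ` V \<and> last p \<in> f ` V"
      "internal p \<inter> f ` V = {}"
      by auto
  next
    fix p p' assume "p \<in> P ` E" "p' \<in> P ` E" "p \<noteq> p'"
    then obtain e e' where "e \<in> E" "e' \<in> E" "e \<noteq> e'" "p = P e" "p' = P e'"
      by force
    then show "internal p \<inter> internal p' = {}"
      using disjoint by simp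
  qed (use \<open>finite V\<close> \<open>finite E\<close> in auto)
  then show ?thesis
    unfolding W F image_image .
qed

end
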